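(* Let $(E,P,\vartheta)$ be a bipolar metric space and let $F\colon E\cup P\to E\cup P$ satisfy $F(E)\subseteq E$, $F(P)\subseteq P$. Assume there exist $\pi\in(0,1)$, an integer $\sigma\geq1$ and constants $q_1,\dots,q_\sigma,H_1,\dots,H_\sigma\in(0,\infty)$ such that $$\sum_{\upsilon=1}^{\sigma}q_\upsilon\,\vartheta^\upsilon(Fe,Ff)\leq\pi\sum_{\upsilon=1}^{\sigma}q_\upsilon\big[\vartheta^\upsilon(e,f)+H_\upsilon\,\vartheta^\upsilon(Fe,f)\big]\quad\text{for all } e\in E,\ f\in P.$$ Then $F$ is Picard-continuous.
   Context: A bipolar metric space is a triple $(E,P,\vartheta)$ where $E,P$ are nonempty sets and $\vartheta\colon E\times P\to[0,\infty)$ satisfies: (1) for $e\in E$, $f\in P$, $\vartheta(e,f)=0$ iff $e=f$; (2) $\vartheta(e,f)=\vartheta(f,e)$ whenever $e,f\in E\cap P$; (3) $\vartheta(e,f)\leq\vartheta(e,z)+\vartheta(r,z)+\vartheta(r,f)$ for all $e,r\in E$, $z,f\in P$. $F$ is Picard-continuous if for all $g\in E$, $h\in P$: $\lim_{n\to\infty}\vartheta(F^ng,h)=0$ implies $\lim_{n\to\infty}\vartheta(F(F^ng),Fh)=0$, where $F^0g=g$, $F^{n+1}g=F(F^ng)$. $\vartheta^\upsilon$ denotes the $\upsilon$-th power of $\vartheta$. *)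

theory Defs
  imports "HOL-Analysis.Analysis"
begin

text \<open>Bipolar metric space (E, P, d): E, P nonempty subsets of an ambient type,
  d only meaningful on E \<times> P.\<close>
definition bipolar_metric_space :: "'a set \<Rightarrow> 'a set \<Rightarrow> ('a \<Rightarrow> 'a \<Rightarrow> real) \<Rightarrow> bool" where
  "bipolar_metric_space E P d \<longleftrightarrow>
     E \<noteq> {} \<and> P \<noteq> {} \<and>
     (\<forall>e\<in>E. \<forall>f\<in>P. d e f \<ge> 0) \<and>
     (\<forall>e\<in>E. \<forall>f\<in>P. d e f = 0 \<longleftrightarrow> e = f) \<and>
     (\<forall>e\<in>E \<inter> P. \<forall>f\<in>E \<inter> P. d e f = d f e) \<and>
     (\<forall>e\<in>E. \<forall>r\<in>E. \<forall>z\<in>P. \<forall>f\<in>P. d e f \<le> d e z + d r z + d r f)"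

definition picard_continuous :: "'a set \<Rightarrow> 'a set \<Rightarrow> ('a \<Rightarrow> 'a \<Rightarrow> real) \<Rightarrow> ('a \<Rightarrow> 'a) \<Rightarrow> bool" where
  "picard_continuous E P d F \<longleftrightarrow>
     (\<forall>g\<in>E. \<forall>h\<in>P. (\<lambda>n. d ((F ^^ n) g) h) \<longlonglongrightarrow> 0 \<longrightarrow>
        (\<lambda>n. d (F ((F ^^ n) g)) (F h)) \<longlonglongrightarrow> 0)"

end

theory Submission
  imports Defs
begin

text \<open>Along a Picard orbit with \<open>\<vartheta>(F\<^sup>n g, h) \<rightarrow> 0\<close>, also \<open>\<vartheta>(F\<^sup>n\<^sup>+\<^sup>1 g, h) \<rightarrow> 0\<close>, so the
  right-hand side of the contractive condition at \<open>(F\<^sup>n g, h)\<close> tends to \<open>0\<close>. Its left-hand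
  side dominates \<open>q\<^sub>1 \<vartheta>(F\<^sup>n\<^sup>+\<^sup>1 g, F h)\<close>, which is therefore squeezed to \<open>0\<close>. Only the
  positivity of the \<open>q\<^sub>\<upsilon>\<close> matters.\<close>

lemma funpow_in_invariant_set:
  assumes "F ` S \<subseteq> S" and "x \<in> S"
  shows "(F ^^ n) x \<in> S"
  using assms by (induction n) auto

lemma bipolar_metric_space_nonneg:
  assumes "bipolar_metric_space E P d" and "e \<in> E" and "f \<in> P"
  shows "0 \<le> d e f"
  using assms unfolding bipolar_metric_space_def by simp

lemma first_term_le_power_sum:
  fixes x :: real
  assumes "0 \<le> x" and "1 \<le> \<sigma>" and "\<And>u. u \<in> {1..\<sigma>} \<Longrightarrow> 0 \<le> q u"
  shows "q 1 * x \<le> (\<Sum>u=1..\<sigma>. q u * x ^ u)"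
proof -
  have "q 1 * x ^ 1 \<le> (\<Sum>u=1..\<sigma>. q u * x ^ u)"
    by (rule member_le_sum) (use assms in auto)
  then show ?thesis by simp
qed

lemma power_sum_tendsto_zero:
  fixes f :: "'a \<Rightarrow> real"
  assumes "(f \<longlongrightarrow> 0) F"
  shows "((\<lambda>x. \<Sum>u=1..\<sigma>. c u * f x ^ u) \<longlongrightarrow> 0) F"
proof (rule tendsto_null_sum)
  fix u :: nat assume "u \<in> {1..\<sigma>}"
  then have "((\<lambda>x. c u * f x ^ u) \<longlongrightarrow> c u * 0 ^ u) F"
    by (intro tendsto_intros assms)
  with \<open>u \<in> {1..\<sigma>}\<close> show "((\<lambda>x. c u * f x ^ u) \<longlongrightarrow> 0) F"
    by (simp add: power_0_left)
qed

lemma contractive_bound_tendsto_zero: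
  fixes a b :: "'a \<Rightarrow> real"
  assumes "(a \<longlongrightarrow> 0) F" and "(b \<longlongrightarrow> 0) F"
  shows "((\<lambda>x. k * (\<Sum>u=1..\<sigma>. q u * (a x ^ u + H u * b x ^ u))) \<longlongrightarrow> 0) F"
proof -
  have split_sum: "(\<Sum>u=1..\<sigma>. q u * (s ^ u + H u * t ^ u))
      = (\<Sum>u=1..\<sigma>. q u * s ^ u) + (\<Sum>u=1..\<sigma>. (q u * H u) * t ^ u)" for s t :: real
    by (simp add: sum.distrib[symmetric] distrib_left mult.assoc)
  have "((\<lambda>x. (\<Sum>u=1..\<sigma>. q u * a x ^ u) + (\<Sum>u=1..\<sigma>. (q u * H u) * b x ^ u)) \<longlongrightarrow> 0) F"
    by (rule tendsto_add_zero power_sum_tendsto_zero assms)+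
  then have "((\<lambda>x. \<Sum>u=1..\<sigma>. q u * (a x ^ u + H u * b x ^ u)) \<longlongrightarrow> 0) F"
    by (simp only: split_sum)
  then show ?thesis
    by (rule tendsto_mult_right_zero)
qed

lemma tendsto_zero_if_power_sum_le:
  fixes b c :: "'a \<Rightarrow> real"
  assumes "1 \<le> \<sigma>" and "\<And>u. u \<in> {1..\<sigma>} \<Longrightarrow> 0 < q u"
    and "\<And>x. 0 \<le> b x" and "\<And>x. (\<Sum>u=1..\<sigma>. q u * b x ^ u) \<le> c x"
    and "(c \<longlongrightarrow> 0) F"
  shows "(b \<longlongrightarrow> 0) F"
proof (rule Lim_null_comparison)
  have q1: "0 < q 1" using assms(1,2) by simp
  show "\<forall>\<^sub>F x in F. norm (b x) \<le> c x / q 1"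
  proof (intro always_eventually allI)
    fix x
    have "q 1 * b x \<le> (\<Sum>u=1..\<sigma>. q u * b x ^ u)"
      by (rule first_term_le_power_sum) (use assms(1-3) less_imp_le in auto)
    also have "\<dots> \<le> c x"
      by (rule assms(4))
    finally have "q 1 * b x \<le> c x" .
    with q1 assms(3) show "norm (b x) \<le> c x / q 1"
      by (simp add: field_simps)
  qed
  show "((\<lambda>x. c x / q 1) \<longlongrightarrow> 0) F"
    using tendsto_divide_zero[OF assms(5)] .
qed

theorem proposition4p4:
  fixes E P :: "'a set" and d :: "'a \<Rightarrow> 'a \<Rightarrow> real" and F :: "'a \<Rightarrow> 'a"
    and pi :: real and \<sigma> :: nat and q H :: "nat \<Rightarrow> real"
  assumes "bipolar_metric_space E P d"
    and "F ` E \<subseteq> E" and "F ` P \<subseteq> P"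
    and "0 < pi" and "pi < 1"
    and "\<sigma> \<ge> 1"
    and "\<And>u. u \<in> {1..\<sigma>} \<Longrightarrow> q u > 0"
    and "\<And>u. u \<in> {1..\<sigma>} \<Longrightarrow> H u > 0"
    and "\<And>e f. e \<in> E \<Longrightarrow> f \<in> P \<Longrightarrow>
           (\<Sum>u=1..\<sigma>. q u * d (F e) (F f) ^ u)
             \<le> pi * (\<Sum>u=1..\<sigma>. q u * (d e f ^ u + H u * d (F e) f ^ u))"
  shows "picard_continuous E P d F"
  unfolding picard_continuous_def
proof (intro ballI impI)
  fix g h assume g: "g \<in> E" and h: "h \<in> P"
  assume lim: "(\<lambda>n. d ((F ^^ n) g) h) \<longlonglongrightarrow> 0"
  define x where "x n = (F ^^ n) g" for n
  have x: "x n \<in> E" "F (x n) \<in> E" for n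
    unfolding x_def using funpow_in_invariant_set[OF assms(2) g] assms(2) by blast+
  have "F h \<in> P" using assms(3) h by blast
  have lim_Suc: "(\<lambda>n. d (F (x n)) h) \<longlonglongrightarrow> 0"
    using LIMSEQ_Suc[OF lim] by (simp add: x_def)
  have rhs: "(\<lambda>n. pi * (\<Sum>u=1..\<sigma>. q u * (d (x n) h ^ u + H u * d (F (x n)) h ^ u)))
              \<longlonglongrightarrow> 0"
    by (rule contractive_bound_tendsto_zero[OF lim[folded x_def] lim_Suc])
  have "(\<lambda>n. d (F (x n)) (F h)) \<longlonglongrightarrow> 0"
  proof (rule tendsto_zero_if_power_sum_le[OF assms(6,7) _ _ rhs])
    show "0 \<le> d (F (x n)) (F h)" for n
      using bipolar_metric_space_nonneg[OF assms(1) x(2) \<open>F h \<in> P\<close>] .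
    show "(\<Sum>u=1..\<sigma>. q u * d (F (x n)) (F h) ^ u)
            \<le> pi * (\<Sum>u=1..\<sigma>. q u * (d (x n) h ^ u + H u * d (F (x n)) h ^ u))" for n
      using assms(9)[OF x(1) h] .
  qed
  then show "(\<lambda>n. d (F ((F ^^ n) g)) (F h)) \<longlonglongrightarrow> 0"
    by (simp add: x_def)
qed

end
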